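(* Let $G$ be a discrete abelian group (written additively), $\alpha\in\mathcal C_c(G,\mathbf k)$, and consider the convolution equation $\sigma(s)=\alpha\star s$, i.e. $s_g^{(t+1)}=\sum_{h\in G}\alpha_h^{(t)}s_{g-h}^{(t)}$. Let ${\rm Sol}_c(\alpha,L^c)$ be the complex vector space of its solutions $s\in\mathcal C(G,{\rm Seq}(\mathbf C))$ such that each $s^{(t)}$ has finite support. Then the Fourier transform $\mathcal F(s)=\sum_{g\in G}s_g\,e^{ig\theta}$ is an isomorphism of $G$-modules from ${\rm Sol}_c(\alpha,L^c)$ onto $$\Big(\prod_{\tau=0}^{t-1}\hat\alpha_\theta^{(\tau)}\Big)\cdot\mathbf C[e^{ig\theta}: g\in G]\subset{\rm Seq}(\mathbf C)[e^{ig\theta}:g\in G],$$ i.e. onto the set of products of the fixed sequence-valued Fourier polynomial $t\mapsto\prod_{\tau=0}^{t-1}\hat\alpha^{(\tau)}_\theta$ with complex Fourier polynomials.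
   Context: ${\rm Seq}(\mathbf C)$ is the ring of complex sequences indexed by $t\in\mathbf Z_{\ge0}$ with shift $\sigma(x)^{(t)}=x^{(t+1)}$; $\mathbf k\subseteq{\rm Seq}(\mathbf C)$ is a $\sigma$-stable subring with constants $\mathbf C$. $\mathcal C_c(G,\mathbf k)$ denotes finitely supported functions $G\to\mathbf k$. For $g\in G$, $e^{ig\theta}$ denotes the function on the dual group $\widehat G={\rm Hom}(G,\mathbf S^1)$ given by $\rho\mapsto\rho(g)$; for a ring $R$, $R[e^{ig\theta}:g\in G]$ is the ring of finite sums $\sum c_g e^{ig\theta}$, $c_g\in R$, with $e^{ig\theta}e^{ih\theta}=e^{i(g+h)\theta}$ (Fourier polynomials). $\hat\alpha^{(\tau)}_\theta=\sum_g\alpha^{(\tau)}_g e^{ig\theta}$. $G$ acts on functions by $(s\star h)_g=s_{g-h}$ and on Fourier polynomials by $e^{ig\theta}\star h=e^{i(g+h)\theta}$. $L^c$ is the smallest $\sigma$-subring of ${\rm Seq}(\mathbf C)$ containing $\mathbf k$ and all values of finite-support solutions. *)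

theory Defs
  imports Complex_Main
begin

type_synonym cseq = "nat \<Rightarrow> complex"

definition shift :: "cseq \<Rightarrow> cseq" where
  "shift x = (\<lambda>t. x (Suc t))"

definition sigma_subring :: "cseq set \<Rightarrow> bool" where
  "sigma_subring R \<longleftrightarrow>
     (\<lambda>_. 0) \<in> R \<and> (\<lambda>_. 1) \<in> R \<and>
     (\<forall>x\<in>R. \<forall>y\<in>R. (\<lambda>t. x t + y t) \<in> R \<and> (\<lambda>t. x t - y t) \<in> R \<and> (\<lambda>t. x t * y t) \<in> R) \<and>
     (\<forall>x\<in>R. shift x \<in> R)"

definition base_field_ok :: "cseq set \<Rightarrow> bool" where
  "base_field_ok k \<longleftrightarrow> sigma_subring k \<and> {x \<in> k. shift x = x} = range (\<lambda>c::complex. (\<lambda>_. c))"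

definition fin_supp :: "('g \<Rightarrow> 'r::zero) \<Rightarrow> bool" where
  "fin_supp f \<longleftrightarrow> finite {g. f g \<noteq> 0}"

text \<open>Fourier polynomials: an element \<Sum> c_g e^{ig\<theta>} is represented by its finitely supported
  coefficient function g \<mapsto> c_g; multiplication is the group-ring (convolution) product,
  encoding e^{ig\<theta>} e^{ih\<theta>} = e^{i(g+h)\<theta>}.\<close>
definition fconv :: "('g::ab_group_add \<Rightarrow> complex) \<Rightarrow> ('g \<Rightarrow> complex) \<Rightarrow> ('g \<Rightarrow> complex)" where
  "fconv a b = (\<lambda>g. \<Sum>h\<in>{h. a h \<noteq> 0}. a h * b (g - h))"

definition fone :: "'g::ab_group_add \<Rightarrow> complex" where
  "fone = (\<lambda>g. if g = 0 then 1 else 0)"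

definition alpha_hat :: "('g \<Rightarrow> cseq) \<Rightarrow> nat \<Rightarrow> ('g \<Rightarrow> complex)" where
  "alpha_hat \<alpha> \<tau> = (\<lambda>g. \<alpha> g \<tau>)"

primrec alpha_prod :: "('g::ab_group_add \<Rightarrow> cseq) \<Rightarrow> nat \<Rightarrow> ('g \<Rightarrow> complex)" where
  "alpha_prod \<alpha> 0 = fone"
| "alpha_prod \<alpha> (Suc t) = fconv (alpha_prod \<alpha> t) (alpha_hat \<alpha> t)"

definition is_sol :: "('g::ab_group_add \<Rightarrow> cseq) \<Rightarrow> ('g \<Rightarrow> cseq) \<Rightarrow> bool" where
  "is_sol \<alpha> s \<longleftrightarrow>
     (\<forall>g t. s g (Suc t) = (\<Sum>h\<in>{h. \<alpha> h \<noteq> (\<lambda>_. 0)}. \<alpha> h t * s (g - h) t))"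

definition fin_sols :: "('g::ab_group_add \<Rightarrow> cseq) \<Rightarrow> ('g \<Rightarrow> cseq) set" where
  "fin_sols \<alpha> = {s. is_sol \<alpha> s \<and> (\<forall>t. fin_supp (\<lambda>g. s g t))}"

definition Lc :: "cseq set \<Rightarrow> ('g::ab_group_add \<Rightarrow> cseq) \<Rightarrow> cseq set" where
  "Lc k \<alpha> = \<Inter> {R. sigma_subring R \<and> k \<subseteq> R \<and> (\<forall>s\<in>fin_sols \<alpha>. \<forall>g. s g \<in> R)}"

definition Sol_c :: "('g::ab_group_add \<Rightarrow> cseq) \<Rightarrow> cseq set \<Rightarrow> ('g \<Rightarrow> cseq) set" where
  "Sol_c \<alpha> L = {s \<in> fin_sols \<alpha>. \<forall>g. s g \<in> L}"

text \<open>Fourier transform: F(s) = \<Sum>_g s_g e^{ig\<theta>}, as the sequence (in t) of Fourier polynomials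
  whose coefficient of e^{ig\<theta>} at time t is s_g^{(t)}.\<close>
definition fourier :: "('g \<Rightarrow> cseq) \<Rightarrow> nat \<Rightarrow> ('g \<Rightarrow> complex)" where
  "fourier s = (\<lambda>t g. s g t)"

text \<open>G-actions: (s \<star> h)_g = s_{g-h};  (e^{ig\<theta>} \<star> h) = e^{i(g+h)\<theta>}, i.e. coefficients shift.\<close>
definition act_fun :: "('g::ab_group_add \<Rightarrow> 'a) \<Rightarrow> 'g \<Rightarrow> ('g \<Rightarrow> 'a)" where
  "act_fun s h = (\<lambda>g. s (g - h))"

definition act_fourier :: "(nat \<Rightarrow> 'g::ab_group_add \<Rightarrow> complex) \<Rightarrow> 'g \<Rightarrow> (nat \<Rightarrow> 'g \<Rightarrow> complex)" where
  "act_fourier P h = (\<lambda>t. act_fun (P t) h)"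

definition target :: "('g::ab_group_add \<Rightarrow> cseq) \<Rightarrow> (nat \<Rightarrow> 'g \<Rightarrow> complex) set" where
  "target \<alpha> = {(\<lambda>t. fconv (alpha_prod \<alpha> t) p) | p. fin_supp p}"

end

theory Submission
  imports Defs
begin

text \<open>The Fourier transform turns the convolution equation into the recursion
  \<open>F(s)(t+1) = alpha_hat(t) \<cdot> F(s)(t)\<close> in the commutative group ring of \<open>G\<close>. Hence a
  solution is determined by its initial Fourier polynomial \<open>p = F(s)(0)\<close>, namely
  \<open>F(s)(t) = (\<Prod>\<tau><t. alpha_hat(\<tau>)) \<cdot> p\<close>, and conversely every finitely supported \<open>p\<close>
  arises this way. Linearity and \<open>G\<close>-equivariance come from the group ring, where
  translation commutes with multiplication.\<close>

lemma fconv_eq_sum_superset: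
  assumes "finite S" "{h. a h \<noteq> 0} \<subseteq> S"
  shows "fconv a b g = (\<Sum>h\<in>S. a h * b (g - h))"
  unfolding fconv_def by (rule sum.mono_neutral_left) (use assms in auto)

lemma supp_fconv_subset:
  "{z. fconv a b z \<noteq> 0} \<subseteq> (\<lambda>(x, y). x + y) ` ({h. a h \<noteq> 0} \<times> {h. b h \<noteq> 0})"
proof
  fix z assume "z \<in> {z. fconv a b z \<noteq> 0}"
  then obtain x where "a x \<noteq> 0" "b (z - x) \<noteq> 0"
    unfolding fconv_def by (metis (mono_tags, lifting) mem_Collect_eq mult_zero_right sum.neutral)
  then have "(x, z - x) \<in> {h. a h \<noteq> 0} \<times> {h. b h \<noteq> 0}" by simp
  then show "z \<in> (\<lambda>(x, y). x + y) ` ({h. a h \<noteq> 0} \<times> {h. b h \<noteq> 0})"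
    by (rule image_eqI[rotated]) simp
qed

lemma fin_supp_fconv:
  assumes "fin_supp a" "fin_supp b"
  shows "fin_supp (fconv a b)"
  using assms supp_fconv_subset[of a b] unfolding fin_supp_def
  by (meson finite_SigmaI finite_imageI finite_subset)

lemma fconv_assoc:
  assumes a: "fin_supp a" and b: "fin_supp b"
  shows "fconv (fconv a b) c = fconv a (fconv b c)"
proof
  fix g
  let ?Sa = "{h. a h \<noteq> 0}" and ?Sb = "{h. b h \<noteq> 0}"
  let ?S = "(\<lambda>(x, y). x + y) ` (?Sa \<times> ?Sb)"
  have fin: "finite ?S" using assms unfolding fin_supp_def by simp
  have shift: "(\<Sum>z\<in>?S. b (z - x) * c (g - z)) = (\<Sum>y\<in>?Sb. b y * c (g - x - y))"
    if x: "x \<in> ?Sa" for x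
  proof -
    have "b (z - x) = 0" if "z \<notin> (\<lambda>y. x + y) ` ?Sb" for z
      using that by (metis (mono_tags) add_diff_cancel_left' diff_add_cancel image_eqI mem_Collect_eq add.commute)
    moreover have "(\<lambda>y. x + y) ` ?Sb \<subseteq> ?S" using x by auto
    ultimately have "(\<Sum>z\<in>?S. b (z - x) * c (g - z)) = (\<Sum>z\<in>(\<lambda>y. x + y) ` ?Sb. b (z - x) * c (g - z))"
      by (intro sum.mono_neutral_right fin) auto
    also have "\<dots> = (\<Sum>y\<in>?Sb. b y * c (g - x - y))"
      by (subst sum.reindex) (auto simp: algebra_simps)
    finally show ?thesis .
  qed
  have "fconv (fconv a b) c g = (\<Sum>z\<in>?S. fconv a b z * c (g - z))"
    by (rule fconv_eq_sum_superset[OF fin supp_fconv_subset])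
  also have "\<dots> = (\<Sum>z\<in>?S. \<Sum>x\<in>?Sa. a x * (b (z - x) * c (g - z)))"
    unfolding fconv_def by (simp add: sum_distrib_right mult.assoc)
  also have "\<dots> = (\<Sum>x\<in>?Sa. a x * (\<Sum>z\<in>?S. b (z - x) * c (g - z)))"
    by (subst sum.swap) (simp add: sum_distrib_left)
  also have "\<dots> = (\<Sum>x\<in>?Sa. a x * (\<Sum>y\<in>?Sb. b y * c (g - x - y)))"
    using shift by simp
  also have "\<dots> = fconv a (fconv b c) g"
    unfolding fconv_def by simp
  finally show "fconv (fconv a b) c g = fconv a (fconv b c) g" .
qed

lemma fconv_commute:
  assumes "fin_supp a" "fin_supp b"
  shows "fconv a b = fconv b a"
proof
  fix g
  let ?Sa = "{h. a h \<noteq> 0}" and ?Sb = "{h. b h \<noteq> 0}"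
  let ?T = "(\<lambda>h. g - h) ` ?Sa \<union> ?Sb"
  have fin: "finite ?T" using assms unfolding fin_supp_def by simp
  have a_zero: "a (g - k) = 0" if "k \<notin> (\<lambda>h. g - h) ` ?Sa" for k
  proof (rule ccontr)
    assume "a (g - k) \<noteq> 0"
    then have "g - (g - k) \<in> (\<lambda>h. g - h) ` ?Sa" by (intro imageI) simp
    with that show False by simp
  qed
  have "fconv a b g = (\<Sum>k\<in>(\<lambda>h. g - h) ` ?Sa. a (g - k) * b k)"
    unfolding fconv_def by (subst sum.reindex) (auto simp: inj_on_def)
  also have "\<dots> = (\<Sum>k\<in>?T. a (g - k) * b k)"
    by (rule sum.mono_neutral_left) (use fin a_zero in auto)
  also have "\<dots> = (\<Sum>k\<in>?Sb. b k * a (g - k))"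
    by (rule sum.mono_neutral_cong_right) (use fin in auto)
  also have "\<dots> = fconv b a g" unfolding fconv_def ..
  finally show "fconv a b g = fconv b a g" .
qed

lemma fconv_fone_left [simp]: "fconv fone p = p"
proof -
  have "{h. fone h \<noteq> (0::complex)} = {0}" by (auto simp: fone_def)
  then show ?thesis by (simp add: fconv_def fone_def)
qed

lemma fin_supp_fone: "fin_supp fone"
  unfolding fin_supp_def fone_def by simp

lemma fconv_linear_right:
  "fconv a (\<lambda>g. x * p g + y * q g) = (\<lambda>g. x * fconv a p g + y * fconv a q g)"
  unfolding fconv_def by (simp add: sum.distrib sum_distrib_left algebra_simps)

lemma fconv_act_fun: "fconv a (act_fun p h) = act_fun (fconv a p) h"
  unfolding fconv_def act_fun_def by (simp add: algebra_simps)

lemma fin_supp_act_fun: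
  fixes p :: "'g::ab_group_add \<Rightarrow> 'a::zero"
  assumes "fin_supp p"
  shows "fin_supp (act_fun p h)"
proof -
  have "{g. act_fun p h g \<noteq> 0} = (\<lambda>x. x + h) ` {g. p g \<noteq> 0}"
    unfolding act_fun_def by (auto simp: image_iff intro!: exI[of _ "_ - h"])
  with assms show ?thesis unfolding fin_supp_def by simp
qed

lemma fourier_lincomb:
  "fourier (\<lambda>g t. a * s g t + b * s' g t) = (\<lambda>t g. a * fourier s t g + b * fourier s' t g)"
  unfolding fourier_def ..

lemma fourier_act_fun: "fourier (act_fun s h) = act_fourier (fourier s) h"
  unfolding fourier_def act_fourier_def act_fun_def ..

context
  fixes \<alpha> :: "'g::ab_group_add \<Rightarrow> cseq"
  assumes alpha_fin: "finite {g. \<alpha> g \<noteq> (\<lambda>_. 0)}"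
begin

lemma fin_supp_alpha_hat: "fin_supp (alpha_hat \<alpha> t)"
  using alpha_fin unfolding fin_supp_def alpha_hat_def
  by (rule rev_finite_subset) auto

lemma fin_supp_alpha_prod: "fin_supp (alpha_prod \<alpha> t)"
  by (induction t) (simp_all add: fin_supp_fone fin_supp_fconv fin_supp_alpha_hat)

lemma fconv_alpha_prod_Suc:
  "fconv (alpha_prod \<alpha> (Suc t)) p = fconv (alpha_hat \<alpha> t) (fconv (alpha_prod \<alpha> t) p)"
proof -
  have "alpha_prod \<alpha> (Suc t) = fconv (alpha_hat \<alpha> t) (alpha_prod \<alpha> t)"
    by (simp add: fconv_commute fin_supp_alpha_hat fin_supp_alpha_prod)
  then show ?thesis
    by (simp add: fconv_assoc fin_supp_alpha_hat fin_supp_alpha_prod)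
qed

lemma is_sol_iff_fourier:
  "is_sol \<alpha> s \<longleftrightarrow> (\<forall>t. fourier s (Suc t) = fconv (alpha_hat \<alpha> t) (fourier s t))"
proof -
  have "fconv (alpha_hat \<alpha> t) q g = (\<Sum>h\<in>{h. \<alpha> h \<noteq> (\<lambda>_. 0)}. \<alpha> h t * q (g - h))" for t q g
    by (subst fconv_eq_sum_superset[OF alpha_fin]) (auto simp: alpha_hat_def)
  then show ?thesis
    unfolding is_sol_def fourier_def by (auto simp: fun_eq_iff)
qed

lemma fourier_sol_eq:
  assumes "is_sol \<alpha> s"
  shows "fourier s t = fconv (alpha_prod \<alpha> t) (fourier s 0)"
proof (induction t)
  case (Suc t)
  have "fourier s (Suc t) = fconv (alpha_hat \<alpha> t) (fconv (alpha_prod \<alpha> t) (fourier s 0))"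
    using assms Suc.IH by (simp add: is_sol_iff_fourier)
  also have "\<dots> = fconv (alpha_prod \<alpha> (Suc t)) (fourier s 0)"
    by (simp only: fconv_alpha_prod_Suc)
  finally show ?case .
qed simp

lemma is_sol_alpha_prod: "is_sol \<alpha> (\<lambda>g t. fconv (alpha_prod \<alpha> t) p g)"
  unfolding is_sol_iff_fourier fourier_def
  by (simp del: alpha_prod.simps add: fconv_alpha_prod_Suc)

lemma fin_sols_lincomb:
  assumes "s \<in> fin_sols \<alpha>" "s' \<in> fin_sols \<alpha>"
  shows "(\<lambda>g t. a * s g t + b * s' g t) \<in> fin_sols \<alpha>"
proof -
  have "fin_supp (\<lambda>g. a * s g t + b * s' g t)" for t
  proof -
    have "finite ({g. s g t \<noteq> 0} \<union> {g. s' g t \<noteq> 0})"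
      using assms unfolding fin_sols_def fin_supp_def by simp
    then show ?thesis
      unfolding fin_supp_def by (rule rev_finite_subset) auto
  qed
  moreover have "is_sol \<alpha> (\<lambda>g t. a * s g t + b * s' g t)"
    using assms unfolding fin_sols_def is_sol_iff_fourier fourier_lincomb
    by (simp add: fourier_def fconv_linear_right)
  ultimately show ?thesis unfolding fin_sols_def by simp
qed

lemma fin_sols_act_fun:
  assumes "s \<in> fin_sols \<alpha>"
  shows "act_fun s h \<in> fin_sols \<alpha>"
proof -
  have "fin_supp (\<lambda>g. act_fun s h g t)" for t
    using assms fin_supp_act_fun[of "\<lambda>g. s g t" h] unfolding fin_sols_def
    by (simp add: act_fun_def)
  moreover have "is_sol \<alpha> (act_fun s h)"
    using assms unfolding fin_sols_def is_sol_iff_fourier fourier_act_fun act_fourier_def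
    by (simp add: fconv_act_fun)
  ultimately show ?thesis unfolding fin_sols_def by simp
qed

lemma fourier_fin_sols: "fourier ` fin_sols \<alpha> = target \<alpha>"
proof (intro equalityI subsetI)
  fix P assume "P \<in> fourier ` fin_sols \<alpha>"
  then obtain s where s: "s \<in> fin_sols \<alpha>" and P: "P = fourier s" by blast
  then have "P = (\<lambda>t. fconv (alpha_prod \<alpha> t) (fourier s 0))"
    using fourier_sol_eq unfolding fin_sols_def by blast
  moreover have "fin_supp (fourier s 0)"
    using s unfolding fin_sols_def fourier_def by simp
  ultimately show "P \<in> target \<alpha>" unfolding target_def by blast
next
  fix P assume "P \<in> target \<alpha>"
  then obtain p where P: "P = (\<lambda>t. fconv (alpha_prod \<alpha> t) p)" and p: "fin_supp p"
    unfolding target_def by blast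
  have "(\<lambda>g t. fconv (alpha_prod \<alpha> t) p g) \<in> fin_sols \<alpha>"
    using is_sol_alpha_prod fin_supp_fconv[OF fin_supp_alpha_prod p]
    unfolding fin_sols_def by simp
  moreover have "P = fourier (\<lambda>g t. fconv (alpha_prod \<alpha> t) p g)"
    unfolding P fourier_def ..
  ultimately show "P \<in> fourier ` fin_sols \<alpha>" by blast
qed

end

lemma act_fourier_target:
  assumes "P \<in> target \<alpha>"
  shows "act_fourier P h \<in> target \<alpha>"
proof -
  obtain p where P: "P = (\<lambda>t. fconv (alpha_prod \<alpha> t) p)" and p: "fin_supp p"
    using assms unfolding target_def by blast
  have "act_fourier P h = (\<lambda>t. fconv (alpha_prod \<alpha> t) (act_fun p h))"
    unfolding P act_fourier_def by (simp add: fconv_act_fun)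
  then show ?thesis
    unfolding target_def using fin_supp_act_fun[OF p] by blast
qed

lemma inj_fourier: "inj fourier"
  by (rule injI) (simp add: fourier_def fun_eq_iff)

lemma Sol_c_Lc: "Sol_c \<alpha> (Lc k \<alpha>) = fin_sols \<alpha>"
  unfolding Sol_c_def Lc_def by auto

theorem theorem2p6:
  fixes k :: "cseq set" and \<alpha> :: "'g::ab_group_add \<Rightarrow> cseq"
  assumes k: "base_field_ok k"
    and alpha_k: "\<forall>g. \<alpha> g \<in> k"
    and alpha_fin: "finite {g. \<alpha> g \<noteq> (\<lambda>_. 0)}"
  shows
    "(\<forall>s\<in>Sol_c \<alpha> (Lc k \<alpha>). \<forall>s'\<in>Sol_c \<alpha> (Lc k \<alpha>). \<forall>a b::complex.
        (\<lambda>g t. a * s g t + b * s' g t) \<in> Sol_c \<alpha> (Lc k \<alpha>) \<and>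
        fourier (\<lambda>g t. a * s g t + b * s' g t) = (\<lambda>t g. a * fourier s t g + b * fourier s' t g))
     \<and> (\<forall>s\<in>Sol_c \<alpha> (Lc k \<alpha>). \<forall>h. act_fun s h \<in> Sol_c \<alpha> (Lc k \<alpha>) \<and>
          fourier (act_fun s h) = act_fourier (fourier s) h)
     \<and> (\<forall>P\<in>target \<alpha>. \<forall>h. act_fourier P h \<in> target \<alpha>)
     \<and> bij_betw fourier (Sol_c \<alpha> (Lc k \<alpha>)) (target \<alpha>)"
  unfolding Sol_c_Lc
proof (intro conjI ballI allI)
  show "(\<lambda>g t. a * s g t + b * s' g t) \<in> fin_sols \<alpha>"
    if "s \<in> fin_sols \<alpha>" "s' \<in> fin_sols \<alpha>" for s s' a b
    using fin_sols_lincomb[OF alpha_fin that] .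
  show "act_fun s h \<in> fin_sols \<alpha>" if "s \<in> fin_sols \<alpha>" for s h
    using fin_sols_act_fun[OF alpha_fin that] .
  show "bij_betw fourier (fin_sols \<alpha>) (target \<alpha>)"
    unfolding bij_betw_def
    using inj_on_subset[OF inj_fourier subset_UNIV] fourier_fin_sols[OF alpha_fin] ..
  show "act_fourier P h \<in> target \<alpha>" if "P \<in> target \<alpha>" for P h
    using act_fourier_target[OF that] .
qed (rule fourier_lincomb fourier_act_fun)+

end
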